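(* Let $P_X$ be a probability distribution on a context space $\mathcal{X}$, $\mathcal{A}$ a finite action set, $\pi_0$ a logging policy with $\pi_0(a|x)>0$ for all $(x,a)$, and $\pi_\theta$ a fixed policy with $w_m=\sup_{(x,a)\in\mathcal{X}\times\mathcal{A}}\pi_\theta(a|x)/\pi_0(a|x)<\infty$. Let $f_r:\mathcal{X}\times\mathcal{A}\to[-1,0]$ be a reward function. Let $S=(x_i,a_i,p_i,r_i)_{i=1}^n$ where $(x_i,a_i)$ are i.i.d. from $P_X\otimes\pi_0(A|X)$, $p_i=\pi_0(a_i|x_i)$ and $r_i=f_r(x_i,a_i)$, and let $\hat{R}(\pi_\theta,S)=\frac1n\sum_{i=1}^n r_i\frac{\pi_\theta(a_i|x_i)}{p_i}$. Then for every $\delta\in(0,1)$, with probability at least $1-\delta$ over the draw of $S$, $$R(\pi_\theta)\le \hat{R}(\pi_\theta,S)+\frac{w_m\log(1/\delta)}{3n}+\sqrt{\frac{\bigl(w_m\sqrt{2\min(D(\pi_\theta\|\pi_0),D_r(\pi_\theta\|\pi_0))}+2\bigr)\log(1/\delta)}{n}}.$$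
   Context: A policy is a conditional distribution $\pi(a|x)$ over $\mathcal{A}$ given $x$. The true risk is $R(\pi)=\mathbb{E}_{X\sim P_X}[\mathbb{E}_{A\sim\pi(\cdot|X)}[f_r(X,A)]]$. Conditional KL: $D(\pi_\theta\|\pi_0)=\int_{\mathcal{X}}\sum_a\pi_\theta(a|x)\log\frac{\pi_\theta(a|x)}{\pi_0(a|x)}\,dP_X(x)$; reverse conditional KL: $D_r(\pi_\theta\|\pi_0)=\int_{\mathcal{X}}\sum_a\pi_0(a|x)\log\frac{\pi_0(a|x)}{\pi_\theta(a|x)}\,dP_X(x)$ (possibly $+\infty$). *)

theory Defs
  imports "HOL-Probability.Probability"
begin

text \<open>A policy is represented as q x a = q(a|x); actions range over a finite type 'a.\<close>

definition is_policy :: "'x measure \<Rightarrow> ('x \<Rightarrow> 'a::finite \<Rightarrow> real) \<Rightarrow> bool" where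
  "is_policy P q \<longleftrightarrow> (\<forall>a. (\<lambda>x. q x a) \<in> borel_measurable P) \<and>
     (\<forall>x\<in>space P. (\<forall>a. q x a \<ge> 0) \<and> (\<Sum>a\<in>UNIV. q x a) = 1)"

definition joint :: "'x measure \<Rightarrow> ('x \<Rightarrow> 'a::finite \<Rightarrow> real) \<Rightarrow> ('x \<times> 'a) measure" where
  "joint P pi0 = density (P \<Otimes>\<^sub>M count_space UNIV) (\<lambda>(x,a). ennreal (pi0 x a))"

definition risk :: "'x measure \<Rightarrow> ('x \<Rightarrow> 'a::finite \<Rightarrow> real) \<Rightarrow> ('x \<Rightarrow> 'a \<Rightarrow> real) \<Rightarrow> real" where
  "risk P fr q = (\<integral>x. (\<Sum>a\<in>UNIV. q x a * fr x a) \<partial>P)"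

definition cond_KL :: "'x measure \<Rightarrow> ('x \<Rightarrow> 'a::finite \<Rightarrow> real) \<Rightarrow> ('x \<Rightarrow> 'a \<Rightarrow> real) \<Rightarrow> ennreal" where
  "cond_KL P q pi0 = (\<integral>\<^sup>+x. ennreal (\<Sum>a\<in>UNIV. (if q x a = 0 then 0 else q x a * ln (q x a / pi0 x a))) \<partial>P)"

definition rev_cond_KL :: "'x measure \<Rightarrow> ('x \<Rightarrow> 'a::finite \<Rightarrow> real) \<Rightarrow> ('x \<Rightarrow> 'a \<Rightarrow> real) \<Rightarrow> ennreal" where
  "rev_cond_KL P q pi0 = (\<integral>\<^sup>+x.
     (if \<exists>a. pi0 x a > 0 \<and> q x a = 0 then \<infinity>
      else ennreal (\<Sum>a\<in>UNIV. (if pi0 x a = 0 then 0 else pi0 x a * ln (pi0 x a / q x a)))) \<partial>P)"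

definition emp_risk :: "nat \<Rightarrow> ('x \<Rightarrow> 'a \<Rightarrow> real) \<Rightarrow> ('x \<Rightarrow> 'a \<Rightarrow> real) \<Rightarrow> ('x \<Rightarrow> 'a \<Rightarrow> real)
     \<Rightarrow> (nat \<Rightarrow> 'x \<times> 'a) \<Rightarrow> real" where
  "emp_risk n fr q pi0 S = (1 / real n) * (\<Sum>i<n. fr (fst (S i)) (snd (S i)) * q (fst (S i)) (snd (S i)) / pi0 (fst (S i)) (snd (S i)))"

end

theory Submission
  imports Defs
begin

(* Under the logging distribution P_X (x) pi0 the importance-weighted loss
  Z(x,a) = f_r(x,a) pith(a|x) / pi0(a|x) has mean R(pith) and values in [-w_m, 0]. As f_r^2 <= 1,
  its second moment is at most sum_a pith^2 / pi0 = 1 + sum_a (pith - pi0) pith / pi0, hence at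
  most 1 + w_m |pith - pi0|_1 / 2 pointwise. Pinsker's inequality, valid for D and for D_r alike,
  together with Jensen bounds the expected L1 distance by sqrt (2 min(D, D_r)). A one-sided
  Bernstein inequality for the i.i.d. sum, with range bound w_m, this variance bound and
  confidence parameter L = log (1/delta), gives the claim. *)

lemma exp_le_quadratic_of_nonpos:
  fixes y :: real assumes "y \<le> 0" shows "exp y \<le> 1 + y + y\<^sup>2 / 2"
proof (cases "y = 0")
  case False
  from Maclaurin_exp_lt[OF False, of 3] obtain t where
    "exp y = (\<Sum>m<3. y ^ m / fact m) + exp t / fact 3 * y ^ 3" by auto
  moreover have "exp t / fact 3 * y ^ 3 \<le> 0"
    using assms by (intro mult_nonneg_nonpos) (simp_all add: power_le_zero_eq_numeral)
  ultimately show ?thesis by (simp add: numeral_3_eq_3 power2_eq_square)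
qed simp

lemma exp_mult_six_minus_le:
  fixes y :: real assumes "0 \<le> y" shows "exp y * (6 - 2*y) \<le> 6 + 4*y + y\<^sup>2"
proof -
  define h where "h = (\<lambda>y::real. (6 + 4*y + y\<^sup>2) * exp (-y) - (6 - 2*y))"
  have "h 0 \<le> h y"
  proof (rule DERIV_nonneg_imp_nondecreasing[OF assms])
    fix x :: real assume x: "0 \<le> x"
    have "(2 + 2*x + x\<^sup>2) * exp (-x) \<le> 2 * exp x * exp (-x)"
      using exp_lower_Taylor_quadratic[OF x] by (intro mult_right_mono) auto
    also have "\<dots> = 2" by (simp add: exp_minus field_simps)
    finally have "0 \<le> (4 + 2*x) * exp (-x) - (6 + 4*x + x\<^sup>2) * exp (-x) + 2"
      by (simp add: algebra_simps)
    moreover have "DERIV h x :> ((4 + 2*x) * exp (-x) - (6 + 4*x + x\<^sup>2) * exp (-x) + 2)"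
      unfolding h_def by (auto intro!: derivative_eq_intros simp: power2_eq_square algebra_simps)
    ultimately show "\<exists>d. DERIV h x :> d \<and> 0 \<le> d" by blast
  qed
  hence "(6 - 2*y) * exp y \<le> (6 + 4*y + y\<^sup>2) * exp (-y) * exp y"
    by (intro mult_right_mono) (auto simp: h_def)
  also have "\<dots> = 6 + 4*y + y\<^sup>2" by (simp add: exp_minus)
  finally show ?thesis by (simp add: mult.commute)
qed

lemma exp_mult_le_bernstein:
  fixes l b u :: real
  assumes "0 \<le> l" "0 \<le> b" "l * b < 3" "u \<le> b"
  shows "exp (l*u) \<le> 1 + l*u + l\<^sup>2 * u\<^sup>2 / (2 * (1 - l*b/3))"
proof -
  have d: "0 < 1 - l*b/3" "1 - l*b/3 \<le> 1" using assms by simp_all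
  show ?thesis
  proof (cases "l*u \<le> 0")
    case True
    have "exp (l*u) \<le> 1 + l*u + (l*u)\<^sup>2/2" by (rule exp_le_quadratic_of_nonpos[OF True])
    also have "(l*u)\<^sup>2/2 \<le> (l*u)\<^sup>2 / (2 * (1 - l*b/3))"
      using d by (intro divide_left_mono) (auto simp: mult.commute)
    finally show ?thesis by (simp add: power_mult_distrib)
  next
    case False
    define y where "y = l*u"
    have y: "0 \<le> y" "y \<le> l*b" using False assms by (simp_all add: y_def mult_left_mono)
    hence y3: "0 < 6 - 2*y" using assms by simp
    have "exp y \<le> (6 + 4*y + y\<^sup>2) / (6 - 2*y)"
      using exp_mult_six_minus_le[OF y(1)] y3 by (simp add: pos_le_divide_eq)
    also have "\<dots> = 1 + y + y\<^sup>2 / (2 * (1 - y/3))"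
      using y3 by (simp add: field_simps power2_eq_square)
    also have "y\<^sup>2 / (2 * (1 - y/3)) \<le> y\<^sup>2 / (2 * (1 - l*b/3))"
      using d y by (intro divide_left_mono mult_pos_pos) auto
    finally show ?thesis by (simp add: y_def power_mult_distrib)
  qed
qed

lemma ln_minus_two_mult_div_mono:
  fixes s t :: real assumes "0 < s" "s \<le> t"
  shows "ln s - 2*(s-1)/(s+1) \<le> ln t - 2*(t-1)/(t+1)"
proof (rule DERIV_nonneg_imp_nondecreasing[of s t "\<lambda>t. ln t - 2*(t-1)/(t+1)", OF assms(2)])
  fix x :: real assume "s \<le> x"
  hence x: "0 < x" using assms by simp
  have "DERIV (\<lambda>t. ln t - 2*(t-1)/(t+1)) x :> 1/x - 4/(x+1)\<^sup>2"
    using x by (auto intro!: derivative_eq_intros simp: power2_eq_square field_simps)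
  moreover have "4*x \<le> (x+1)\<^sup>2"
    using zero_le_power2[of "x-1"] by (simp add: power2_eq_square algebra_simps)
  hence "4/(x+1)\<^sup>2 \<le> 1/x" using x by (simp add: field_simps)
  ultimately show "\<exists>d. DERIV (\<lambda>t. ln t - 2*(t-1)/(t+1)) x :> d \<and> 0 \<le> d" by force
qed

section \<open>Pinsker's inequality\<close>

lemma pinsker_ratio:
  fixes t :: real assumes "0 < t"
  shows "3*(t-1)\<^sup>2 \<le> (2*t+4)*(t * ln t - t + 1)"
proof -
  define g where "g = (\<lambda>t::real. (2*t+4)*(t * ln t - t + 1) - 3*(t-1)\<^sup>2)"
  have g': "DERIV g x :> 4 * (x+1) * (ln x - 2*(x-1)/(x+1))" if "0 < x" for x
    unfolding g_def using that
    by (auto intro!: derivative_eq_intros simp: power2_eq_square field_simps)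
  have "g 1 \<le> g t"
  proof (cases "1 \<le> t")
    case True
    show ?thesis
    proof (rule DERIV_nonneg_imp_nondecreasing[OF True])
      fix x :: real assume "1 \<le> x"
      with ln_minus_two_mult_div_mono[of 1 x] g'[of x]
      show "\<exists>d. DERIV g x :> d \<and> 0 \<le> d" by force
    qed
  next
    case False
    show ?thesis
    proof (rule DERIV_nonpos_imp_nonincreasing[of t 1 g])
      fix x :: real assume "t \<le> x" "x \<le> 1"
      with assms ln_minus_two_mult_div_mono[of x 1] g'[of x]
      show "\<exists>d. DERIV g x :> d \<and> d \<le> 0" by (force intro: mult_nonneg_nonpos)
    qed (use False in simp)
  qed
  thus ?thesis by (simp add: g_def)
qed

lemma pinsker_pair:
  fixes p q :: real assumes "0 < p" "0 < q"
  shows "3*(p-q)\<^sup>2 \<le> (2*p+4*q)*(p * ln (p/q) - p + q)"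
proof -
  define t where "t = p/q"
  have p: "p = q*t" using assms by (simp add: t_def)
  have "q\<^sup>2 * (3*(t-1)\<^sup>2) \<le> q\<^sup>2 * ((2*t+4)*(t * ln t - t + 1))"
    using pinsker_ratio[of t] assms by (intro mult_left_mono) (auto simp: t_def)
  thus ?thesis unfolding p using assms by (simp add: power2_eq_square algebra_simps)
qed

text \<open>The pointwise bound is summed with Cauchy--Schwarz; the weights (2p + 4q)/3 sum to 2.\<close>

lemma pinsker_sum:
  fixes p q :: "'a::finite \<Rightarrow> real"
  assumes q: "\<And>a. 0 < q a" and p: "\<And>a. 0 \<le> p a"
    and sp: "(\<Sum>a\<in>UNIV. p a) = 1" and sq: "(\<Sum>a\<in>UNIV. q a) = 1"
  shows "(\<Sum>a\<in>UNIV. \<bar>p a - q a\<bar>)\<^sup>2 \<le> 2 * (\<Sum>a\<in>UNIV. (if p a = 0 then 0 else p a * ln (p a / q a)))"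
proof -
  define A where "A = (\<lambda>a. (2 * p a + 4 * q a) / 3)"
  define B where "B = (\<lambda>a. (if p a = 0 then 0 else p a * ln (p a / q a)) - p a + q a)"
  have AB: "(p a - q a)\<^sup>2 \<le> A a * B a" "0 \<le> A a" "0 \<le> B a" for a
  proof -
    show A: "0 \<le> A a" using p[of a] q[of a] by (simp add: A_def)
    show AB: "(p a - q a)\<^sup>2 \<le> A a * B a"
    proof (cases "p a = 0")
      case True thus ?thesis using q[of a] by (simp add: A_def B_def power2_eq_square)
    next
      case False
      with p[of a] have "0 < p a" by simp
      from pinsker_pair[OF this q[of a]] False show ?thesis by (simp add: A_def B_def)
    qed
    have "0 < A a" using p[of a] q[of a] by (simp add: A_def add_nonneg_pos)
    with AB show "0 \<le> B a" using zero_le_power2[of "p a - q a"]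
      by (smt (verit) mult_pos_neg)
  qed
  have "(\<Sum>a\<in>UNIV. \<bar>p a - q a\<bar>) \<le> (\<Sum>a\<in>UNIV. sqrt (A a) * sqrt (B a))"
    using AB(1) by (intro sum_mono) (metis real_sqrt_abs real_sqrt_le_mono real_sqrt_mult)
  hence "(\<Sum>a\<in>UNIV. \<bar>p a - q a\<bar>)\<^sup>2 \<le> (\<Sum>a\<in>UNIV. sqrt (A a) * sqrt (B a))\<^sup>2"
    by (intro power_mono) (auto intro: sum_nonneg)
  also have "\<dots> \<le> (\<Sum>a\<in>UNIV. (sqrt (A a))\<^sup>2) * (\<Sum>a\<in>UNIV. (sqrt (B a))\<^sup>2)"
    by (rule Cauchy_Schwarz_ineq_sum)
  also have "\<dots> = (\<Sum>a\<in>UNIV. A a) * (\<Sum>a\<in>UNIV. B a)" using AB by simp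
  also have "(\<Sum>a\<in>UNIV. A a) = 2"
    using sp sq by (simp add: A_def sum_divide_distrib[symmetric] sum.distrib sum_distrib_left[symmetric])
  also have "(\<Sum>a\<in>UNIV. B a) = (\<Sum>a\<in>UNIV. (if p a = 0 then 0 else p a * ln (p a / q a)))"
    using sp sq by (simp add: B_def sum.distrib sum_subtractf)
  finally show ?thesis .
qed

section \<open>A one-sided Bernstein inequality\<close>

lemma bernstein_mgf_bound:
  assumes "prob_space E" and [measurable]: "Z \<in> borel_measurable E"
    and bnd: "\<forall>s\<in>space E. \<bar>Z s\<bar> \<le> B"
    and up: "\<forall>s\<in>space E. \<mu> - Z s \<le> b" and mu: "\<mu> = integral\<^sup>L E Z"
    and b: "0 \<le> b" and l: "0 \<le> l" "l*b < 3"
    and var: "(\<integral>s. (Z s - \<mu>)\<^sup>2 \<partial>E) \<le> v"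
  shows "(\<integral>\<^sup>+s. ennreal (exp (l * (\<mu> - Z s))) \<partial>E) \<le> ennreal (exp (l\<^sup>2 * v / (2*(1 - l*b/3))))"
proof -
  interpret prob_space E by fact
  define d where "d = 2*(1 - l*b/3)"
  have d: "0 < d" using l by (simp add: d_def mult.commute)
  define g where "g = (\<lambda>s. 1 + l*(\<mu> - Z s) + l\<^sup>2 * (\<mu> - Z s)\<^sup>2 / d)"
  have iZ: "integrable E Z"
    by (rule integrable_const_bound[where B=B]) (use bnd in auto)
  have iZ2: "integrable E (\<lambda>s. (Z s - \<mu>)\<^sup>2)"
  proof (rule integrable_const_bound[where B="(B + \<bar>\<mu>\<bar>)\<^sup>2"])
    show "AE x in E. norm ((Z x - \<mu>)\<^sup>2) \<le> (B + \<bar>\<mu>\<bar>)\<^sup>2"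
    proof (rule AE_I2)
      fix x assume "x \<in> space E"
      hence "\<bar>Z x - \<mu>\<bar> \<le> B + \<bar>\<mu>\<bar>" using bnd by auto
      hence "\<bar>Z x - \<mu>\<bar>\<^sup>2 \<le> (B + \<bar>\<mu>\<bar>)\<^sup>2" by (intro power_mono) auto
      thus "norm ((Z x - \<mu>)\<^sup>2) \<le> (B + \<bar>\<mu>\<bar>)\<^sup>2" by simp
    qed
  qed simp
  have pt: "exp (l * (\<mu> - Z s)) \<le> g s" if "s \<in> space E" for s
    using exp_mult_le_bernstein[OF l(1) b l(2), of "\<mu> - Z s"] up that by (simp add: g_def d_def)
  have ig: "integrable E g"
    unfolding g_def using iZ iZ2
    by (auto intro!: integrable_add integrable_diff integrable_mult_right integrable_divide simp: power2_commute)
  have "(\<integral>\<^sup>+s. ennreal (exp (l * (\<mu> - Z s))) \<partial>E) \<le> (\<integral>\<^sup>+s. ennreal (g s) \<partial>E)"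
    by (intro nn_integral_mono ennreal_leI) (use pt in auto)
  also have "\<dots> = ennreal (integral\<^sup>L E g)"
    using pt by (intro nn_integral_eq_integral[OF ig] AE_I2) (smt (verit) exp_gt_zero)
  also have "integral\<^sup>L E g = 1 + l\<^sup>2 * (\<integral>s. (Z s - \<mu>)\<^sup>2 \<partial>E) / d"
  proof -
    have "integral\<^sup>L E g = (\<integral>s. 1 + l*(\<mu> - Z s) \<partial>E) + (\<integral>s. l\<^sup>2 * (Z s - \<mu>)\<^sup>2 / d \<partial>E)"
      unfolding g_def using iZ iZ2
      by (subst Bochner_Integration.integral_add[symmetric])
        (auto intro!: integrable_add integrable_diff simp: power2_commute)
    also have "(\<integral>s. 1 + l*(\<mu> - Z s) \<partial>E) = 1"
      using iZ mu by (simp add: Bochner_Integration.integral_add Bochner_Integration.integral_diff prob_space)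
    finally show ?thesis by simp
  qed
  also have "\<dots> \<le> 1 + l\<^sup>2 * v / d"
    using var d by (simp add: divide_right_mono mult_left_mono)
  also have "\<dots> \<le> exp (l\<^sup>2 * v / d)" by (rule exp_ge_add_one_self)
  finally show ?thesis by (simp add: d_def ennreal_leI)
qed

text \<open>The Chernoff parameter that makes the exponent of the Bernstein tail bound equal to -L.\<close>

lemma bernstein_exponent:
  fixes V L b :: real
  assumes "0 < V" "0 < L" "0 \<le> b"
  defines "l \<equiv> sqrt (2*L/V) / (1 + b/3 * sqrt (2*L/V))"
  shows "0 < l" and "l * b < 3"
    and "- l * (sqrt (2*V*L) + b*L/3) + l\<^sup>2 * V / (2*(1 - l*b/3)) = -L"
proof -
  define s where "s = sqrt (2*L/V)"
  have s: "0 < s" "s\<^sup>2 * V = 2*L" using assms by (simp_all add: s_def)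
  define d where "d = 1 + b/3 * s"
  have d: "0 < d" "b/3 * s = d - 1" using s assms by (simp_all add: d_def add_pos_nonneg)
  have l: "l = s / d" by (simp add: l_def s_def d_def)
  show "0 < l" using s d by (simp add: l)
  have "l*b/3 = (d - 1) / d" unfolding l d(2)[symmetric] by (simp add: mult_ac)
  hence lb: "1 - l*b/3 = 1 / d" using d by (simp add: field_simps)
  moreover have "0 < 1 / d" using d by simp
  ultimately show "l * b < 3" by linarith
  have sT: "s * sqrt (2*V*L) = 2*L"
  proof -
    have "s * sqrt (2*V*L) = sqrt (2*L/V * (2*V*L))" by (simp only: s_def real_sqrt_mult)
    also have "2*L/V * (2*V*L) = (2*L)\<^sup>2" using assms by (simp add: field_simps power2_eq_square)
    also have "sqrt ((2*L)\<^sup>2) = 2*L" using assms by (subst real_sqrt_abs) simp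
    finally show ?thesis .
  qed
  have "l\<^sup>2 * V / (2*(1 - l*b/3)) = s\<^sup>2 * V / (2*d)"
    unfolding lb unfolding l using d(1) by (simp add: power2_eq_square field_simps)
  also have "\<dots> = L / d" using s by simp
  finally have "l\<^sup>2 * V / (2*(1 - l*b/3)) = L / d" .
  moreover have "l * (sqrt (2*V*L) + b*L/3) = (s * sqrt (2*V*L) + b/3 * s * L) / d"
    using d(1) by (simp add: l field_simps)
  hence "l * (sqrt (2*V*L) + b*L/3) = (2*L + (d - 1)*L) / d" unfolding sT d(2) .
  ultimately have "- l * (sqrt (2*V*L) + b*L/3) + l\<^sup>2 * V / (2*(1 - l*b/3))
      = - ((2*L + (d - 1)*L) / d) + L / d"
    by (simp only: mult_minus_left)
  also have "\<dots> = -L" using d(1) by (simp add: field_simps)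
  finally show "- l * (sqrt (2*V*L) + b*L/3) + l\<^sup>2 * V / (2*(1 - l*b/3)) = -L" .
qed

lemma bernstein_tail_PiM:
  assumes E: "prob_space E" and Zm[measurable]: "Z \<in> borel_measurable E"
    and bnd: "\<forall>s\<in>space E. \<bar>Z s\<bar> \<le> B"
    and up: "\<forall>s\<in>space E. \<mu> - Z s \<le> b" and mu: "\<mu> = integral\<^sup>L E Z" and b: "0 \<le> b"
    and var: "(\<integral>s. (Z s - \<mu>)\<^sup>2 \<partial>E) \<le> v" and v: "0 < v" and L: "0 < L" and n: "1 \<le> n"
  shows "measure (PiM {..<n} (\<lambda>_. E))
     {S \<in> space (PiM {..<n} (\<lambda>_. E)). sqrt (2 * real n * v * L) + b * L / 3 \<le> (\<Sum>i<n. \<mu> - Z (S i))}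
     \<le> exp (-L)"
proof -
  interpret E: prob_space E by fact
  interpret PiE: product_prob_space "\<lambda>_. E" "{..<n}"
    by unfold_locales
  let ?M = "PiM {..<n} (\<lambda>_. E)"
  define V where "V = real n * v"
  have V: "0 < V" using n v by (simp add: V_def)
  define l where "l = sqrt (2*L/V) / (1 + b/3 * sqrt (2*L/V))"
  note exponent = bernstein_exponent[OF V L b, folded l_def]
  define T where "T = sqrt (2 * real n * v * L) + b * L / 3"
  define f where "f = (\<lambda>S. \<Sum>i<n. \<mu> - Z (S i))"
  have mgf: "(\<Prod>i\<in>{..<n}. (\<integral>\<^sup>+x. ennreal (exp (l * (\<mu> - Z x))) \<partial>E))
      \<le> ennreal (exp (l\<^sup>2 * V / (2*(1 - l*b/3))))"
  proof -
    have "(\<Prod>i\<in>{..<n}. (\<integral>\<^sup>+x. ennreal (exp (l * (\<mu> - Z x))) \<partial>E))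
        \<le> (\<Prod>i\<in>{..<n}. ennreal (exp (l\<^sup>2 * v / (2*(1 - l*b/3)))))"
      by (intro prod_mono_ennreal bernstein_mgf_bound[OF E Zm bnd up mu b less_imp_le[OF exponent(1)] exponent(2) var])
    also have "\<dots> = ennreal (exp (real n * (l\<^sup>2 * v / (2*(1 - l*b/3)))))"
      by (subst exp_of_nat_mult) (simp add: ennreal_power)
    finally show ?thesis by (simp add: V_def mult_ac)
  qed
  have "emeasure ?M {S \<in> space ?M. T \<le> f S}
      \<le> ennreal (exp (-l * T)) * (\<integral>\<^sup>+S. ennreal (exp (l * f S)) * indicator (space ?M) S \<partial>?M)"
    using exponent(1) by (intro Chernoff_ineq_nn_integral_ge) (auto simp: f_def)
  also have "(\<integral>\<^sup>+S. ennreal (exp (l * f S)) * indicator (space ?M) S \<partial>?M)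
      = (\<integral>\<^sup>+S. (\<Prod>i\<in>{..<n}. ennreal (exp (l * (\<mu> - Z (S i))))) \<partial>?M)"
    by (intro nn_integral_cong) (simp add: f_def sum_distrib_left exp_sum prod_ennreal)
  also have "\<dots> = (\<Prod>i\<in>{..<n}. (\<integral>\<^sup>+x. ennreal (exp (l * (\<mu> - Z x))) \<partial>E))"
    by (rule PiE.product_nn_integral_prod) auto
  finally have "emeasure ?M {S \<in> space ?M. T \<le> f S}
      \<le> ennreal (exp (-l * T)) * ennreal (exp (l\<^sup>2 * V / (2*(1 - l*b/3))))"
    using mgf by (meson mult_left_mono order_trans zero_le)
  also have "\<dots> = ennreal (exp (-L))"
    using exponent(3) by (simp add: T_def V_def ennreal_mult[symmetric] exp_add[symmetric] mult.assoc)
  finally show ?thesis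
    by (simp add: PiE.P.emeasure_eq_measure T_def f_def)
qed

lemma bernstein_mean_PiM:
  assumes E: "prob_space E" and Zm[measurable]: "Z \<in> borel_measurable E"
    and bnd: "\<forall>s\<in>space E. \<bar>Z s\<bar> \<le> B"
    and up: "\<forall>s\<in>space E. \<mu> - Z s \<le> b" and mu: "\<mu> = integral\<^sup>L E Z" and b: "0 \<le> b"
    and var: "(\<integral>s. (Z s - \<mu>)\<^sup>2 \<partial>E) \<le> v" and v: "0 < v" and L: "0 < L" and n: "1 \<le> n"
  shows "1 - exp (-L) \<le> measure (PiM {..<n} (\<lambda>_. E))
    {S \<in> space (PiM {..<n} (\<lambda>_. E)).
       \<mu> \<le> (\<Sum>i<n. Z (S i)) / real n + b * L / (3 * real n) + sqrt (2 * v * L / real n)}"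
    (is "_ \<le> measure ?M ?G")
proof -
  interpret M: prob_space ?M by (rule prob_space_PiM) (rule E)
  let ?F = "{S \<in> space ?M. sqrt (2 * real n * v * L) + b * L / 3 \<le> (\<Sum>i<n. \<mu> - Z (S i))}"
  have "space ?M - ?F \<subseteq> ?G"
  proof
    fix S assume S: "S \<in> space ?M - ?F"
    define r where "r = sqrt (2 * v * L / real n)"
    have "2 * real n * v * L = (real n)\<^sup>2 * (2 * v * L / real n)"
      using n by (simp add: power2_eq_square)
    hence "sqrt (2 * real n * v * L) = sqrt ((real n)\<^sup>2) * r"
      unfolding r_def by (simp only: real_sqrt_mult)
    hence "sqrt (2 * real n * v * L) = real n * r" by simp
    moreover have "\<not> sqrt (2 * real n * v * L) + b * L / 3 \<le> real n * \<mu> - (\<Sum>i<n. Z (S i))"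
      using S by (simp add: sum_subtractf)
    ultimately have "real n * \<mu> \<le> real n * ((\<Sum>i<n. Z (S i)) / real n + b * L / (3 * real n) + r)"
      using n by (simp add: distrib_left)
    thus "S \<in> ?G" using S n by (simp add: r_def)
  qed
  moreover have "?F \<in> sets ?M" "?G \<in> sets ?M" by measurable
  ultimately show ?thesis
    using bernstein_tail_PiM[OF E Zm bnd up mu b var v L n] M.prob_compl[of ?F]
      M.finite_measure_mono[of "space ?M - ?F" ?G]
    by linarith
qed

lemma borel_measurable_case_prod_finite:
  fixes f :: "'x \<Rightarrow> 'a::finite \<Rightarrow> real"
  assumes "\<And>a. (\<lambda>x. f x a) \<in> borel_measurable P"
  shows "(\<lambda>(x,a). f x a) \<in> borel_measurable (P \<Otimes>\<^sub>M count_space UNIV)"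
proof -
  have [measurable]: "(\<lambda>x. f x b) \<in> borel_measurable P" for b by (rule assms)
  have "(\<lambda>(x,a). f x a) = (\<lambda>z. \<Sum>b\<in>UNIV. (if snd z = b then f (fst z) b else 0))"
    by (auto simp: fun_eq_iff if_distrib sum.delta)
  thus ?thesis by simp
qed

lemma space_joint [simp]: "space (joint P p) = space P \<times> UNIV"
  by (simp add: joint_def space_pair_measure)

lemma sets_joint [measurable_cong]: "sets (joint P p) = sets (P \<Otimes>\<^sub>M count_space UNIV)"
  by (simp add: joint_def)

lemma is_policy_le_1:
  assumes "is_policy P q" "x \<in> space P" shows "q x a \<le> 1"
proof -
  have "q x a \<le> (\<Sum>a\<in>UNIV. q x a)"
    using assms by (intro member_le_sum) (auto simp: is_policy_def)
  thus ?thesis using assms by (simp add: is_policy_def)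
qed

lemma prob_space_joint:
  fixes P :: "'x measure" and p :: "'x \<Rightarrow> 'a::finite \<Rightarrow> real"
  assumes "prob_space P" and pol: "is_policy P p"
  shows "prob_space (joint P p)"
proof (rule prob_spaceI)
  interpret P: prob_space P by fact
  interpret C: sigma_finite_measure "count_space (UNIV::'a set)"
    by (rule sigma_finite_measure_count_space_finite) simp
  have [measurable]: "(\<lambda>x. p x a) \<in> borel_measurable P" for a
    using pol by (simp add: is_policy_def)
  have pm: "(\<lambda>(x,a). p x a) \<in> borel_measurable (P \<Otimes>\<^sub>M count_space UNIV)"
    by (rule borel_measurable_case_prod_finite) simp
  have "emeasure (joint P p) (space (joint P p)) =
      (\<integral>\<^sup>+z. ennreal ((\<lambda>(x,a). p x a) z) \<partial>(P \<Otimes>\<^sub>M count_space UNIV))"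
    unfolding joint_def using pm
    by (subst emeasure_density) (auto intro!: nn_integral_cong simp: space_pair_measure split_beta')
  also have "\<dots> = (\<integral>\<^sup>+x. \<integral>\<^sup>+a. ennreal (p x a) \<partial>count_space UNIV \<partial>P)"
    using pm by (subst C.nn_integral_fst[symmetric]) auto
  also have "\<dots> = (\<integral>\<^sup>+x. 1 \<partial>P)"
    using pol by (intro nn_integral_cong)
      (simp add: is_policy_def nn_integral_count_space_finite sum_ennreal)
  finally show "emeasure (joint P p) (space (joint P p)) = 1"
    by (simp add: P.emeasure_space_1)
qed

lemma integral_joint:
  fixes P :: "'x measure" and p :: "'x \<Rightarrow> 'a::finite \<Rightarrow> real" and g :: "'x \<times> 'a \<Rightarrow> real"
  assumes "prob_space P" and pol: "is_policy P p"
    and [measurable]: "g \<in> borel_measurable (P \<Otimes>\<^sub>M count_space UNIV)"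
    and bnd: "\<forall>x\<in>space P. \<forall>a. \<bar>g (x,a)\<bar> \<le> B"
  shows "integral\<^sup>L (joint P p) g = (\<integral>x. (\<Sum>a\<in>UNIV. p x a * g (x,a)) \<partial>P)"
proof -
  interpret P: prob_space P by fact
  interpret C: sigma_finite_measure "count_space (UNIV::'a set)"
    by (rule sigma_finite_measure_count_space_finite) simp
  interpret PC: pair_sigma_finite P "count_space (UNIV::'a set)" ..
  interpret PCF: finite_measure "P \<Otimes>\<^sub>M count_space (UNIV::'a set)"
    by (intro finite_measure_pair_measure finite_measure_count_space P.finite_measure_axioms) simp
  have [measurable]: "(\<lambda>x. p x a) \<in> borel_measurable P" for a
    using pol by (simp add: is_policy_def)
  have pm: "(\<lambda>(x,a). p x a) \<in> borel_measurable (P \<Otimes>\<^sub>M count_space UNIV)"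
    by (rule borel_measurable_case_prod_finite) simp
  have int: "integrable (P \<Otimes>\<^sub>M count_space UNIV) (\<lambda>z. (case z of (x, a) \<Rightarrow> p x a) *\<^sub>R g z)"
  proof (rule PCF.integrable_const_bound[where B=B])
    show "AE z in P \<Otimes>\<^sub>M count_space UNIV. norm ((case z of (x, a) \<Rightarrow> p x a) *\<^sub>R g z) \<le> B"
    proof (rule AE_I2)
      fix z assume "z \<in> space (P \<Otimes>\<^sub>M count_space (UNIV::'a set))"
      then obtain x a where z: "z = (x,a)" "x \<in> space P" by (auto simp: space_pair_measure)
      have "\<bar>p x a\<bar> * \<bar>g (x,a)\<bar> \<le> 1 * B"
        using is_policy_le_1[OF pol z(2)] pol bnd z(2)
        by (intro mult_mono) (auto simp: is_policy_def)
      thus "norm ((case z of (x, a) \<Rightarrow> p x a) *\<^sub>R g z) \<le> B" by (simp add: z abs_mult)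
    qed
  qed (use pm in simp)
  have "integral\<^sup>L (joint P p) g = (\<integral>z. (\<lambda>(x,a). p x a) z *\<^sub>R g z \<partial>(P \<Otimes>\<^sub>M count_space UNIV))"
    unfolding joint_def using pm pol
    by (subst integral_density[symmetric]) (auto simp: space_pair_measure split_beta' is_policy_def)
  also have "\<dots> = (\<integral>x. (\<integral>a. p x a * g (x,a) \<partial>count_space UNIV) \<partial>P)"
    using PC.integral_fst'[OF int] by simp
  also have "\<dots> = (\<integral>x. (\<Sum>a\<in>UNIV. p x a * g (x,a)) \<partial>P)"
    by (simp add: lebesgue_integral_count_space_finite)
  finally show ?thesis .
qed

section \<open>Bounds through the conditional divergences\<close>

lemma l1_dist_sq_le_cond_KL:
  fixes P :: "'x measure" and q p :: "'x \<Rightarrow> 'a::finite \<Rightarrow> real"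
  assumes "is_policy P q" "is_policy P p" "\<forall>x\<in>space P. \<forall>a. 0 < p x a"
  shows "(\<integral>\<^sup>+x. ennreal ((\<Sum>a\<in>UNIV. \<bar>q x a - p x a\<bar>)\<^sup>2 / 2) \<partial>P) \<le> cond_KL P q p"
  unfolding cond_KL_def
proof (intro nn_integral_mono ennreal_leI)
  fix x assume "x \<in> space P"
  with assms have "(\<Sum>a\<in>UNIV. \<bar>q x a - p x a\<bar>)\<^sup>2
      \<le> 2 * (\<Sum>a\<in>UNIV. if q x a = 0 then 0 else q x a * ln (q x a / p x a))"
    by (intro pinsker_sum) (auto simp: is_policy_def)
  thus "(\<Sum>a\<in>UNIV. \<bar>q x a - p x a\<bar>)\<^sup>2 / 2
      \<le> (\<Sum>a\<in>UNIV. if q x a = 0 then 0 else q x a * ln (q x a / p x a))" by simp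
qed

lemma l1_dist_sq_le_rev_cond_KL:
  fixes P :: "'x measure" and q p :: "'x \<Rightarrow> 'a::finite \<Rightarrow> real"
  assumes "is_policy P q" "is_policy P p" "\<forall>x\<in>space P. \<forall>a. 0 < p x a"
  shows "(\<integral>\<^sup>+x. ennreal ((\<Sum>a\<in>UNIV. \<bar>q x a - p x a\<bar>)\<^sup>2 / 2) \<partial>P) \<le> rev_cond_KL P q p"
  unfolding rev_cond_KL_def
proof (intro nn_integral_mono)
  fix x assume x: "x \<in> space P"
  show "ennreal ((\<Sum>a\<in>UNIV. \<bar>q x a - p x a\<bar>)\<^sup>2 / 2) \<le> (if \<exists>a. p x a > 0 \<and> q x a = 0 then \<infinity>
      else ennreal (\<Sum>a\<in>UNIV. if p x a = 0 then 0 else p x a * ln (p x a / q x a)))"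
  proof (cases "\<exists>a. p x a > 0 \<and> q x a = 0")
    case False
    with x assms have "0 < q x a" for a
      by (metis is_policy_def less_eq_real_def)
    with x assms have "(\<Sum>a\<in>UNIV. \<bar>p x a - q x a\<bar>)\<^sup>2
        \<le> 2 * (\<Sum>a\<in>UNIV. if p x a = 0 then 0 else p x a * ln (p x a / q x a))"
      by (intro pinsker_sum) (auto simp: is_policy_def)
    thus ?thesis using False by (simp add: abs_minus_commute ennreal_leI)
  qed simp
qed

lemma cond_KL_le_ln_weight:
  fixes P :: "'x measure" and q p :: "'x \<Rightarrow> 'a::finite \<Rightarrow> real"
  assumes "prob_space P" and q: "is_policy P q" and p: "\<forall>x\<in>space P. \<forall>a. 0 < p x a"
    and w: "\<forall>x\<in>space P. \<forall>a. q x a / p x a \<le> w"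
  shows "cond_KL P q p \<le> ennreal (ln w)"
proof -
  have "(\<Sum>a\<in>UNIV. if q x a = 0 then 0 else q x a * ln (q x a / p x a)) \<le> (\<Sum>a\<in>UNIV. q x a * ln w)"
    if x: "x \<in> space P" for x
  proof (intro sum_mono)
    fix a
    have q0: "0 \<le> q x a" using q x by (simp add: is_policy_def)
    show "(if q x a = 0 then 0 else q x a * ln (q x a / p x a)) \<le> q x a * ln w"
    proof (cases "q x a = 0")
      case False
      hence "0 < q x a / p x a" using q0 p x by simp
      hence "ln (q x a / p x a) \<le> ln w" using w x by (metis ln_le_cancel_iff order.strict_trans2)
      thus ?thesis using False q0 by (simp add: mult_left_mono)
    qed simp
  qed
  moreover have "(\<Sum>a\<in>UNIV. q x a * ln w) = ln w" if "x \<in> space P" for x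
    using q that by (simp add: is_policy_def sum_distrib_right[symmetric])
  ultimately have "cond_KL P q p \<le> (\<integral>\<^sup>+x. ennreal (ln w) \<partial>P)"
    unfolding cond_KL_def by (intro nn_integral_mono ennreal_leI) auto
  thus ?thesis using prob_space.emeasure_space_1[OF assms(1)] by simp
qed

lemma (in prob_space) square_integral_le_integral_square:
  fixes f :: "'a \<Rightarrow> real"
  assumes "integrable M f" "integrable M (\<lambda>x. (f x)\<^sup>2)"
  shows "(integral\<^sup>L M f)\<^sup>2 \<le> (\<integral>x. (f x)\<^sup>2 \<partial>M)"
  using variance_eq[OF assms] integral_nonneg_AE[of "\<lambda>x. (f x - integral\<^sup>L M f)\<^sup>2" M] by simp

lemma l1_dist_le_2:
  assumes "is_policy P q" "is_policy P p" "x \<in> space P"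
  shows "(\<Sum>a\<in>UNIV. \<bar>q x a - p x a\<bar>) \<le> 2"
proof -
  have "(\<Sum>a\<in>UNIV. \<bar>q x a - p x a\<bar>) \<le> (\<Sum>a\<in>UNIV. q x a + p x a)"
    using assms by (intro sum_mono) (auto simp: is_policy_def abs_le_iff)
  also have "\<dots> = 2" using assms by (simp add: is_policy_def sum.distrib)
  finally show ?thesis .
qed

lemma integral_l1_dist_le_sqrt_min_KL:
  fixes P :: "'x measure" and q p :: "'x \<Rightarrow> 'a::finite \<Rightarrow> real"
  assumes "prob_space P" and q: "is_policy P q" and p: "is_policy P p"
    and p_pos: "\<forall>x\<in>space P. \<forall>a. 0 < p x a" and KL_fin: "cond_KL P q p < \<infinity>"
  shows "(\<integral>x. (\<Sum>a\<in>UNIV. \<bar>q x a - p x a\<bar>) \<partial>P)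
    \<le> sqrt (2 * enn2real (min (cond_KL P q p) (rev_cond_KL P q p)))"
proof -
  interpret prob_space P by fact
  define D where "D = (\<lambda>x. \<Sum>a\<in>UNIV. \<bar>q x a - p x a\<bar>)"
  have [measurable]: "(\<lambda>x. q x a) \<in> borel_measurable P" "(\<lambda>x. p x a) \<in> borel_measurable P" for a
    using p q by (auto simp: is_policy_def)
  have [measurable]: "D \<in> borel_measurable P" unfolding D_def by measurable
  have D: "0 \<le> D x" "D x \<le> 2" if "x \<in> space P" for x
    using l1_dist_le_2[OF q p that] by (simp_all add: D_def sum_nonneg)
  have iD: "integrable P D"
    by (rule integrable_const_bound[where B=2]) (use D in auto)
  have iD2: "integrable P (\<lambda>x. (D x)\<^sup>2)"
  proof (rule integrable_const_bound[where B=4])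
    show "AE x in P. norm ((D x)\<^sup>2) \<le> 4"
    proof (rule AE_I2)
      fix x assume "x \<in> space P"
      hence "(D x)\<^sup>2 \<le> 2\<^sup>2" using D by (intro power_mono) auto
      thus "norm ((D x)\<^sup>2) \<le> 4" by simp
    qed
  qed simp
  have "ennreal ((\<integral>x. (D x)\<^sup>2 \<partial>P) / 2) = (\<integral>\<^sup>+x. ennreal ((D x)\<^sup>2 / 2) \<partial>P)"
    using iD2 by (subst nn_integral_eq_integral) auto
  also have "\<dots> \<le> min (cond_KL P q p) (rev_cond_KL P q p)"
    using l1_dist_sq_le_cond_KL[OF q p p_pos] l1_dist_sq_le_rev_cond_KL[OF q p p_pos]
    by (simp add: D_def)
  finally have "enn2real (ennreal ((\<integral>x. (D x)\<^sup>2 \<partial>P) / 2))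
      \<le> enn2real (min (cond_KL P q p) (rev_cond_KL P q p))"
    using KL_fin by (intro enn2real_mono) (auto simp: min.strict_coboundedI1)
  moreover have "0 \<le> (\<integral>x. (D x)\<^sup>2 \<partial>P)" by (intro integral_nonneg_AE) auto
  ultimately have "(\<integral>x. (D x)\<^sup>2 \<partial>P) / 2 \<le> enn2real (min (cond_KL P q p) (rev_cond_KL P q p))"
    by simp
  hence "(integral\<^sup>L P D)\<^sup>2 \<le> 2 * enn2real (min (cond_KL P q p) (rev_cond_KL P q p))"
    using square_integral_le_integral_square[OF iD iD2] by linarith
  hence "integral\<^sup>L P D \<le> sqrt (2 * enn2real (min (cond_KL P q p) (rev_cond_KL P q p)))"
    by (rule real_le_rsqrt)
  thus ?thesis by (simp add: D_def)
qed

section \<open>The importance-weighted loss\<close>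

definition max_weight :: "'x measure \<Rightarrow> ('x \<Rightarrow> 'a::finite \<Rightarrow> real) \<Rightarrow> ('x \<Rightarrow> 'a \<Rightarrow> real) \<Rightarrow> real" where
  "max_weight P q p = (SUP (x,a)\<in>space P \<times> UNIV. q x a / p x a)"

definition ips_loss :: "('x \<Rightarrow> 'a \<Rightarrow> real) \<Rightarrow> ('x \<Rightarrow> 'a \<Rightarrow> real) \<Rightarrow> ('x \<Rightarrow> 'a \<Rightarrow> real) \<Rightarrow> 'x \<times> 'a \<Rightarrow> real" where
  "ips_loss f q p = (\<lambda>(x,a). f x a * q x a / p x a)"

lemma emp_risk_eq_ips_loss: "emp_risk n f q p S = (1 / real n) * (\<Sum>i<n. ips_loss f q p (S i))"
  by (simp add: emp_risk_def ips_loss_def split_beta)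

text \<open>With r = p/q: q (f r)^2 \<le> p r = p + (p - q) r, and (p - q) r \<le> w max (p - q) 0.\<close>

lemma ips_term_sq_le:
  fixes p q f w :: real
  assumes q: "0 < q" and p: "0 \<le> p" and f: "\<bar>f\<bar> \<le> 1" and w: "p / q \<le> w"
  shows "q * (f * p / q)\<^sup>2 \<le> p + w * (\<bar>p - q\<bar> + (p - q)) / 2"
proof -
  have "q * (f * p / q)\<^sup>2 = f\<^sup>2 * (p * (p / q))" using q by (simp add: power2_eq_square field_simps)
  also have "\<dots> \<le> p * (p / q)"
    using p q f by (intro mult_left_le_one_le) (auto simp: abs_square_le_1)
  also have "\<dots> = p + (p - q) * (p / q)" using q by (simp add: field_simps)
  also have "(p - q) * (p / q) \<le> w * (\<bar>p - q\<bar> + (p - q)) / 2"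
  proof (cases "q \<le> p")
    case True
    hence "(p - q) * (p / q) \<le> (p - q) * w" using w by (intro mult_left_mono) auto
    moreover have "w * (\<bar>p - q\<bar> + (p - q)) / 2 = (p - q) * w" using True by simp
    ultimately show ?thesis by linarith
  next
    case False
    hence "(p - q) * (p / q) \<le> 0" using p q by (intro mult_nonpos_nonneg) auto
    thus ?thesis using False by simp
  qed
  finally show ?thesis by simp
qed

locale ips_setting =
  fixes P :: "'x measure" and pi0 pith fr :: "'x \<Rightarrow> 'a::finite \<Rightarrow> real"
  assumes prob_space_P: "prob_space P"
    and policy_pi0: "is_policy P pi0" and pi0_pos: "\<forall>x\<in>space P. \<forall>a. pi0 x a > 0"
    and policy_pith: "is_policy P pith"
    and weight_bdd: "bdd_above ((\<lambda>(x,a). pith x a / pi0 x a) ` (space P \<times> UNIV))"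
    and fr_range: "\<forall>x\<in>space P. \<forall>a. -1 \<le> fr x a \<and> fr x a \<le> 0"
    and fr_measurable: "\<forall>a. (\<lambda>x. fr x a) \<in> borel_measurable P"
begin

sublocale P: prob_space P by (rule prob_space_P)

sublocale J: prob_space "joint P pi0" by (rule prob_space_joint[OF prob_space_P policy_pi0])

abbreviation "w_m \<equiv> max_weight P pith pi0"

abbreviation "Z \<equiv> ips_loss fr pith pi0"

abbreviation "min_KL \<equiv> enn2real (min (cond_KL P pith pi0) (rev_cond_KL P pith pi0))"

lemma measurable_components [measurable]:
  "(\<lambda>x. pi0 x a) \<in> borel_measurable P" "(\<lambda>x. pith x a) \<in> borel_measurable P"
  "(\<lambda>x. fr x a) \<in> borel_measurable P"
  using policy_pi0 policy_pith fr_measurable by (auto simp: is_policy_def)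

lemma pith_nonneg: "x \<in> space P \<Longrightarrow> 0 \<le> pith x a"
  using policy_pith by (simp add: is_policy_def)

lemma weight_le_max_weight: "x \<in> space P \<Longrightarrow> pith x a / pi0 x a \<le> w_m"
  using cSUP_upper[of "(x,a)" "space P \<times> UNIV" "\<lambda>(x,a). pith x a / pi0 x a"] weight_bdd
  by (auto simp: max_weight_def)

lemma weight_nonneg:
  assumes "x \<in> space P" shows "0 \<le> pith x a / pi0 x a"
proof -
  have "0 < pi0 x a" using pi0_pos assms by simp
  thus ?thesis using pith_nonneg[OF assms] by simp
qed

lemma max_weight_nonneg: "0 \<le> w_m"
proof -
  obtain x where x: "x \<in> space P" using P.not_empty by blast
  show ?thesis using weight_nonneg[OF x] weight_le_max_weight[OF x] order_trans by blast
qed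

lemma ips_loss_measurable [measurable]: "Z \<in> borel_measurable (P \<Otimes>\<^sub>M count_space UNIV)"
  unfolding ips_loss_def by (rule borel_measurable_case_prod_finite) simp

lemma ips_loss_range:
  assumes "x \<in> space P" shows "-w_m \<le> Z (x,a)" "Z (x,a) \<le> 0"
proof -
  have w: "0 \<le> pith x a / pi0 x a" "pith x a / pi0 x a \<le> w_m"
    using weight_nonneg[OF assms] weight_le_max_weight[OF assms] by auto
  have f: "-1 \<le> fr x a" "fr x a \<le> 0" using assms fr_range by auto
  have "Z (x,a) = fr x a * (pith x a / pi0 x a)" by (simp add: ips_loss_def)
  moreover have "-1 * (pith x a / pi0 x a) \<le> fr x a * (pith x a / pi0 x a)"
    using w f by (intro mult_right_mono) auto
  moreover have "fr x a * (pith x a / pi0 x a) \<le> 0"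
    using w f by (intro mult_nonpos_nonneg)
  ultimately show "-w_m \<le> Z (x,a)" "Z (x,a) \<le> 0" using w by linarith+
qed

lemma abs_ips_loss_le:
  assumes "s \<in> space (joint P pi0)" shows "\<bar>Z s\<bar> \<le> w_m"
proof -
  obtain x a where "s = (x,a)" "x \<in> space P" using assms by auto
  thus ?thesis using ips_loss_range[of x a] by (auto simp: abs_le_iff)
qed

lemma integral_ips_loss: "integral\<^sup>L (joint P pi0) Z = risk P fr pith"
proof -
  have "integral\<^sup>L (joint P pi0) Z = (\<integral>x. (\<Sum>a\<in>UNIV. pi0 x a * Z (x,a)) \<partial>P)"
    using abs_ips_loss_le
    by (intro integral_joint[OF prob_space_P policy_pi0 ips_loss_measurable, of w_m]) auto
  also have "\<dots> = risk P fr pith"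
    unfolding risk_def
  proof (intro Bochner_Integration.integral_cong refl sum.cong)
    fix x a assume "x \<in> space P"
    hence "pi0 x a \<noteq> 0" using pi0_pos by (metis less_irrefl)
    thus "pi0 x a * Z (x,a) = pith x a * fr x a" by (simp add: ips_loss_def)
  qed
  finally show ?thesis .
qed

lemma integrable_ips_loss: "integrable (joint P pi0) Z"
  using abs_ips_loss_le by (intro J.integrable_const_bound[where B=w_m] AE_I2) auto

lemma integrable_sq_ips_loss: "integrable (joint P pi0) (\<lambda>s. (Z s)\<^sup>2)"
proof (intro J.integrable_const_bound[where B="w_m\<^sup>2"] AE_I2)
  fix s assume "s \<in> space (joint P pi0)"
  thus "norm ((Z s)\<^sup>2) \<le> w_m\<^sup>2"
    using abs_ips_loss_le max_weight_nonneg by (simp add: power2_le_iff_abs_le)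
qed simp

lemma risk_nonpos: "risk P fr pith \<le> 0"
proof -
  have "integral\<^sup>L (joint P pi0) Z \<le> integral\<^sup>L (joint P pi0) (\<lambda>_. 0::real)"
    using ips_loss_range integrable_ips_loss by (intro integral_mono) auto
  thus ?thesis by (simp add: integral_ips_loss)
qed

lemma cond_KL_finite: "cond_KL P pith pi0 < \<infinity>"
proof -
  have "cond_KL P pith pi0 \<le> ennreal (ln w_m)"
    using weight_le_max_weight by (intro cond_KL_le_ln_weight[OF prob_space_P policy_pith pi0_pos]) auto
  thus ?thesis by (metis ennreal_less_top infinity_ennreal_def order.strict_trans1)
qed

lemma second_moment_ips_loss_le:
  assumes x: "x \<in> space P"
  shows "(\<Sum>a\<in>UNIV. pi0 x a * (Z (x,a))\<^sup>2) \<le> 1 + w_m / 2 * (\<Sum>a\<in>UNIV. \<bar>pith x a - pi0 x a\<bar>)"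
proof -
  have "(\<Sum>a\<in>UNIV. pi0 x a * (Z (x,a))\<^sup>2)
      \<le> (\<Sum>a\<in>UNIV. pith x a + w_m * (\<bar>pith x a - pi0 x a\<bar> + (pith x a - pi0 x a)) / 2)"
  proof (intro sum_mono)
    fix a
    have "\<bar>fr x a\<bar> \<le> 1" using fr_range x by (simp add: abs_le_iff)
    thus "pi0 x a * (Z (x,a))\<^sup>2 \<le> pith x a + w_m * (\<bar>pith x a - pi0 x a\<bar> + (pith x a - pi0 x a)) / 2"
      using ips_term_sq_le[of "pi0 x a" "pith x a"] pi0_pos pith_nonneg weight_le_max_weight x
      by (simp add: ips_loss_def)
  qed
  also have "\<dots> = (\<Sum>a\<in>UNIV. pith x a)
      + w_m / 2 * ((\<Sum>a\<in>UNIV. \<bar>pith x a - pi0 x a\<bar>) + (\<Sum>a\<in>UNIV. pith x a - pi0 x a))"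
    by (simp add: sum.distrib sum_divide_distrib[symmetric] sum_distrib_left[symmetric])
  also have "\<dots> = 1 + w_m / 2 * (\<Sum>a\<in>UNIV. \<bar>pith x a - pi0 x a\<bar>)"
    using policy_pith policy_pi0 x by (simp add: is_policy_def sum_subtractf)
  finally show ?thesis .
qed

lemma integral_sq_ips_loss_le:
  "(\<integral>s. (Z s)\<^sup>2 \<partial>joint P pi0) \<le> 1 + w_m / 2 * sqrt (2 * min_KL)"
proof -
  define D where "D = (\<lambda>x. \<Sum>a\<in>UNIV. \<bar>pith x a - pi0 x a\<bar>)"
  have [measurable]: "D \<in> borel_measurable P" unfolding D_def by measurable
  have D: "0 \<le> D x" "D x \<le> 2" if "x \<in> space P" for x
    using l1_dist_le_2[OF policy_pith policy_pi0 that] by (simp_all add: D_def sum_nonneg)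
  have iD: "integrable P D" by (rule P.integrable_const_bound[where B=2]) (use D in auto)
  have sq_bound: "\<forall>x\<in>space P. \<forall>a. \<bar>(Z (x,a))\<^sup>2\<bar> \<le> w_m\<^sup>2"
    using abs_ips_loss_le max_weight_nonneg by (simp add: power2_le_iff_abs_le)
  have "(\<integral>s. (Z s)\<^sup>2 \<partial>joint P pi0) = (\<integral>x. (\<Sum>a\<in>UNIV. pi0 x a * (Z (x,a))\<^sup>2) \<partial>P)"
    using sq_bound by (intro integral_joint[OF prob_space_P policy_pi0]) auto
  also have "\<dots> \<le> (\<integral>x. 1 + w_m / 2 * D x \<partial>P)"
  proof (rule integral_mono)
    show "integrable P (\<lambda>x. \<Sum>a\<in>UNIV. pi0 x a * (Z (x,a))\<^sup>2)"
    proof (rule P.integrable_const_bound[where B="1 + w_m"])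
      show "AE x in P. norm (\<Sum>a\<in>UNIV. pi0 x a * (Z (x,a))\<^sup>2) \<le> 1 + w_m"
      proof (rule AE_I2)
        fix x assume x: "x \<in> space P"
        have "0 \<le> (\<Sum>a\<in>UNIV. pi0 x a * (Z (x,a))\<^sup>2)"
          using pi0_pos x by (intro sum_nonneg) (simp add: less_imp_le)
        moreover have "w_m / 2 * D x \<le> w_m / 2 * 2"
          using D[OF x] max_weight_nonneg by (intro mult_left_mono) auto
        ultimately show "norm (\<Sum>a\<in>UNIV. pi0 x a * (Z (x,a))\<^sup>2) \<le> 1 + w_m"
          using second_moment_ips_loss_le[OF x] by (simp add: D_def)
      qed
    qed measurable
  qed (use iD second_moment_ips_loss_le in \<open>auto simp: D_def\<close>)
  also have "\<dots> = 1 + w_m / 2 * (\<integral>x. D x \<partial>P)" using iD by (simp add: P.prob_space)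
  also have "\<dots> \<le> 1 + w_m / 2 * sqrt (2 * min_KL)"
    using integral_l1_dist_le_sqrt_min_KL[OF prob_space_P policy_pith policy_pi0 pi0_pos cond_KL_finite]
      max_weight_nonneg
    by (intro add_left_mono mult_left_mono) (auto simp: D_def)
  finally show ?thesis .
qed

lemma variance_ips_loss_le:
  "(\<integral>s. (Z s - risk P fr pith)\<^sup>2 \<partial>joint P pi0) \<le> (w_m * sqrt (2 * min_KL) + 2) / 2"
proof -
  have "(\<integral>s. (Z s - risk P fr pith)\<^sup>2 \<partial>joint P pi0) \<le> (\<integral>s. (Z s)\<^sup>2 \<partial>joint P pi0)"
    using J.variance_eq[OF integrable_ips_loss integrable_sq_ips_loss] by (simp add: integral_ips_loss)
  also have "\<dots> \<le> (w_m * sqrt (2 * min_KL) + 2) / 2"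
    using integral_sq_ips_loss_le by (simp add: field_simps)
  finally show ?thesis .
qed

lemma ips_high_probability_bound:
  assumes L: "0 < L" and n: "1 \<le> n"
  shows "1 - exp (-L) \<le> measure (PiM {..<n} (\<lambda>_. joint P pi0))
    {S \<in> space (PiM {..<n} (\<lambda>_. joint P pi0)).
       risk P fr pith \<le> emp_risk n fr pith pi0 S + w_m * L / (3 * real n)
         + sqrt ((w_m * sqrt (2 * min_KL) + 2) * L / real n)}"
proof -
  define R where "R = risk P fr pith"
  define v where "v = (w_m * sqrt (2 * min_KL) + 2) / 2"
  have "0 \<le> w_m * sqrt (2 * min_KL)" using max_weight_nonneg by simp
  hence v: "0 < v" by (simp add: v_def)
  have "1 - exp (-L) \<le> measure (PiM {..<n} (\<lambda>_. joint P pi0))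
    {S \<in> space (PiM {..<n} (\<lambda>_. joint P pi0)).
       R \<le> (\<Sum>i<n. Z (S i)) / real n + w_m * L / (3 * real n) + sqrt (2 * v * L / real n)}"
  proof (rule bernstein_mean_PiM[OF J.prob_space_axioms _ _ _ _ max_weight_nonneg _ v L n])
    show "Z \<in> borel_measurable (joint P pi0)" by measurable
    show "\<forall>s\<in>space (joint P pi0). \<bar>Z s\<bar> \<le> w_m" using abs_ips_loss_le by blast
    show "\<forall>s\<in>space (joint P pi0). R - Z s \<le> w_m"
    proof
      fix s assume "s \<in> space (joint P pi0)"
      then obtain x a where "s = (x,a)" "x \<in> space P" by auto
      thus "R - Z s \<le> w_m" using ips_loss_range[of x a] risk_nonpos by (simp add: R_def)
    qed
    show "R = integral\<^sup>L (joint P pi0) Z" by (simp add: R_def integral_ips_loss)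
    show "(\<integral>s. (Z s - R)\<^sup>2 \<partial>joint P pi0) \<le> v"
      using variance_ips_loss_le by (simp add: R_def v_def)
  qed
  moreover have "2 * v = w_m * sqrt (2 * min_KL) + 2" by (simp add: v_def)
  ultimately show ?thesis by (simp add: R_def emp_risk_eq_ips_loss)
qed

end

theorem theorem1:
  fixes P :: "'x measure" and pi0 pith fr :: "'x \<Rightarrow> 'a::finite \<Rightarrow> real"
    and n :: nat and \<delta> :: real
  assumes "prob_space P"
    and "is_policy P pi0" and "\<forall>x\<in>space P. \<forall>a. pi0 x a > 0"
    and "is_policy P pith"
    and "bdd_above ((\<lambda>(x,a). pith x a / pi0 x a) ` (space P \<times> UNIV))"
    and "\<forall>x\<in>space P. \<forall>a. -1 \<le> fr x a \<and> fr x a \<le> 0"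
    and "\<forall>a. (\<lambda>x. fr x a) \<in> borel_measurable P"
    and "n \<ge> 1"
    and "0 < \<delta>" and "\<delta> < 1"
  shows "measure (PiM {..<n} (\<lambda>_. joint P pi0))
           {S \<in> space (PiM {..<n} (\<lambda>_. joint P pi0)).
              risk P fr pith \<le> emp_risk n fr pith pi0 S
                + (SUP (x,a)\<in>space P \<times> UNIV. pith x a / pi0 x a) * ln (1 / \<delta>) / (3 * real n)
                + sqrt (((SUP (x,a)\<in>space P \<times> UNIV. pith x a / pi0 x a)
                          * sqrt (2 * enn2real (min (cond_KL P pith pi0) (rev_cond_KL P pith pi0))) + 2)
                         * ln (1 / \<delta>) / real n)}
         \<ge> 1 - \<delta>"
proof -
  interpret ips_setting P pi0 pith fr
    using assms(1-7) by (rule ips_setting.intro)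
  have "0 < ln (1 / \<delta>)" and "exp (- ln (1 / \<delta>)) = \<delta>"
    using assms(9,10) by (simp_all add: ln_div)
  with ips_high_probability_bound[of "ln (1 / \<delta>)" n] assms(8) show ?thesis
    by (simp add: max_weight_def)
qed

end
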